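(* There exist an undirected graph $G=(V,E)$, pairs $(u_i,v_i)$ of distinct nodes of $V$, $1\le i\le4$, with $\sigma_{u_1v_1}=\sigma_{u_2v_2}=2$ and $\sigma_{u_3v_3}=\sigma_{u_4v_4}=1$, and values $x_1,\dots,x_4\in(0,1]$ such that the set $\{((u_i,v_i),x_i): 1\le i\le 4\}$ is shattered by $\{R_w: w\in V\}$.
   Context: $\mathcal{D}=\{(u,v)\in V\times V: u\ne v\}$. $\sigma_{uv}$ is the number of shortest paths from $u$ to $v$, $\sigma_{uv}(w)$ the number of those to which $w$ is internal ($w\ne u,v$, path through $w$); $f_w(u,v)=\sigma_{uv}(w)/\sigma_{uv}$ ($0$ if $\sigma_{uv}=0$). For $w\in V$, $R_w=\{((u,v),x)\in\mathcal{D}\times[0,1]: x\le f_w(u,v)\}$. A set $Q$ is shattered by a collection of sets $\mathcal{R}$ if $\{R\cap Q: R\in\mathcal{R}\}$ equals the power set of $Q$. *)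

theory Defs
  imports Complex_Main
begin

definition undirected_graph :: "'a set \<Rightarrow> ('a \<Rightarrow> 'a \<Rightarrow> bool) \<Rightarrow> bool" where
  "undirected_graph V E \<longleftrightarrow> finite V \<and> (\<forall>a b. E a b \<longrightarrow> a \<in> V \<and> b \<in> V)
     \<and> (\<forall>a b. E a b \<longrightarrow> E b a) \<and> (\<forall>a. \<not> E a a)"

definition is_path :: "'a set \<Rightarrow> ('a \<Rightarrow> 'a \<Rightarrow> bool) \<Rightarrow> 'a list \<Rightarrow> 'a \<Rightarrow> 'a \<Rightarrow> bool" where
  "is_path V E p u v \<longleftrightarrow> p \<noteq> [] \<and> hd p = u \<and> last p = v \<and> set p \<subseteq> V
     \<and> (\<forall>i. Suc i < length p \<longrightarrow> E (p ! i) (p ! Suc i))"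

definition shortest_paths :: "'a set \<Rightarrow> ('a \<Rightarrow> 'a \<Rightarrow> bool) \<Rightarrow> 'a \<Rightarrow> 'a \<Rightarrow> 'a list set" where
  "shortest_paths V E u v =
     {p. is_path V E p u v \<and> (\<forall>q. is_path V E q u v \<longrightarrow> length p \<le> length q)}"

definition sigma :: "'a set \<Rightarrow> ('a \<Rightarrow> 'a \<Rightarrow> bool) \<Rightarrow> 'a \<Rightarrow> 'a \<Rightarrow> nat" where
  "sigma V E u v = card (shortest_paths V E u v)"

definition sigma_through :: "'a set \<Rightarrow> ('a \<Rightarrow> 'a \<Rightarrow> bool) \<Rightarrow> 'a \<Rightarrow> 'a \<Rightarrow> 'a \<Rightarrow> nat" where
  "sigma_through V E u v w =
     (if w = u \<or> w = v then 0
      else card {p \<in> shortest_paths V E u v. w \<in> set (butlast (tl p))})"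

definition fw :: "'a set \<Rightarrow> ('a \<Rightarrow> 'a \<Rightarrow> bool) \<Rightarrow> 'a \<Rightarrow> 'a \<Rightarrow> 'a \<Rightarrow> real" where
  "fw V E w u v = (if sigma V E u v = 0 then 0
                   else real (sigma_through V E u v w) / real (sigma V E u v))"

definition Rw :: "'a set \<Rightarrow> ('a \<Rightarrow> 'a \<Rightarrow> bool) \<Rightarrow> 'a \<Rightarrow> (('a \<times> 'a) \<times> real) set" where
  "Rw V E w = {((u,v),x). u \<in> V \<and> v \<in> V \<and> u \<noteq> v \<and> 0 \<le> x \<and> x \<le> 1 \<and> x \<le> fw V E w u v}"

definition shattered :: "'b set \<Rightarrow> 'b set set \<Rightarrow> bool" where
  "shattered Q RR \<longleftrightarrow> (\<lambda>R. R \<inter> Q) ` RR = Pow Q"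

end

theory Submission
  imports Defs
begin

(* A point ((u,v), 1/sigma_uv) lies in R_w exactly when w is an interior vertex of some
   shortest u-v path. It therefore suffices to exhibit, in a concrete graph, two pairs with two
   shortest paths and two pairs with a unique one whose sets of interior vertices are in general
   position: each of the 16 membership patterns is realised by some vertex. The shortest paths
   are certified by labellings D with D v = 0 that drop by at most one along every edge; such a
   labelling bounds the length of every path to v from below, so the paths along which it
   descends by exactly one per step are precisely the shortest ones. *)

lemma is_path_Cons_Cons:
  "is_path V E (x # y # ys) u v \<longleftrightarrow> x = u \<and> x \<in> V \<and> E x y \<and> is_path V E (y # ys) y v"
  unfolding is_path_def by (auto simp: All_less_Suc2)

lemma is_path_endpoints_in_vertices:
  assumes "is_path V E p u v"
  shows "u \<in> V" "v \<in> V"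
  using assms unfolding is_path_def by (auto dest: hd_in_set last_in_set)

definition distance_lower_bound :: "('a \<Rightarrow> 'a \<Rightarrow> bool) \<Rightarrow> 'a \<Rightarrow> ('a \<Rightarrow> nat) \<Rightarrow> bool" where
  "distance_lower_bound E v D \<longleftrightarrow> D v = 0 \<and> (\<forall>a b. E a b \<longrightarrow> D a \<le> Suc (D b))"

lemma length_path_ge_distance_lower_bound:
  assumes D: "distance_lower_bound E v D"
  shows "is_path V E p a v \<Longrightarrow> Suc (D a) \<le> length p"
proof (induction p arbitrary: a)
  case Nil
  then show ?case by (simp add: is_path_def)
next
  case (Cons x xs)
  show ?case
  proof (cases xs)
    case Nil
    then show ?thesis using Cons.prems D by (auto simp: is_path_def distance_lower_bound_def)
  next
    case (Cons b ys)
    then have "E a b" "is_path V E xs b v"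
      using Cons.prems by (auto simp: is_path_Cons_Cons)
    then show ?thesis using Cons.IH D by (fastforce simp: distance_lower_bound_def)
  qed
qed

fun descent_paths :: "('a \<Rightarrow> nat) \<Rightarrow> ('a \<Rightarrow> 'a list) \<Rightarrow> 'a \<Rightarrow> nat \<Rightarrow> 'a \<Rightarrow> 'a list list" where
  "descent_paths D nbrs v 0 a = (if a = v then [[a]] else [])"
| "descent_paths D nbrs v (Suc k) a =
     concat (map (\<lambda>b. map ((#) a) (descent_paths D nbrs v k b)) (filter (\<lambda>b. D b = k) (nbrs a)))"

lemma set_descent_paths:
  assumes D: "distance_lower_bound E v D" and nbrs: "\<And>a b. E a b \<longleftrightarrow> b \<in> set (nbrs a)"
    and G: "undirected_graph V E" and v: "v \<in> V"
  shows "D a = k \<Longrightarrow> set (descent_paths D nbrs v k a) = {p. is_path V E p a v \<and> length p = Suc k}"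
proof (induction k arbitrary: a)
  case 0
  show ?case
    using v by (auto simp: length_Suc_conv is_path_def)
next
  case (Suc k)
  have edge_in_V: "a \<in> V" if "E a b" for a b
    using G that unfolding undirected_graph_def by blast
  show ?case
  proof (intro set_eqI iffI)
    fix p assume "p \<in> set (descent_paths D nbrs v (Suc k) a)"
    then obtain b q where "E a b" "D b = k" "q \<in> set (descent_paths D nbrs v k b)" "p = a # q"
      using nbrs by auto
    moreover from this Suc.IH have q: "is_path V E q b v" "length q = Suc k" by auto
    moreover from q obtain ys where "q = b # ys"
      by (cases q) (auto simp: is_path_def)
    ultimately show "p \<in> {p. is_path V E p a v \<and> length p = Suc (Suc k)}"
      using edge_in_V[OF \<open>E a b\<close>] by (simp add: is_path_Cons_Cons)
  next
    fix p assume p: "p \<in> {p. is_path V E p a v \<and> length p = Suc (Suc k)}"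
    then obtain b ys where p_eq: "p = a # b # ys" and "E a b" and path_b: "is_path V E (b # ys) b v"
      by (auto simp: length_Suc_conv is_path_Cons_Cons)
    have "Suc (D b) \<le> length (b # ys)"
      using length_path_ge_distance_lower_bound[OF D path_b] .
    moreover have "D a \<le> Suc (D b)"
      using D \<open>E a b\<close> by (simp add: distance_lower_bound_def)
    ultimately have "D b = k"
      using p p_eq Suc.prems by simp
    then have "b # ys \<in> set (descent_paths D nbrs v k b)"
      using Suc.IH path_b p p_eq by simp
    moreover have "b \<in> set (filter (\<lambda>b. D b = k) (nbrs a))"
      using nbrs \<open>E a b\<close> \<open>D b = k\<close> by simp
    ultimately show "p \<in> set (descent_paths D nbrs v (Suc k) a)"
      using p_eq by force
  qed
qed

lemma shortest_paths_eq_descent_paths: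
  assumes D: "distance_lower_bound E v D" and nbrs: "\<And>a b. E a b \<longleftrightarrow> b \<in> set (nbrs a)"
    and G: "undirected_graph V E" and v: "v \<in> V"
    and reachable: "descent_paths D nbrs v (D u) u \<noteq> []"
  shows "shortest_paths V E u v = set (descent_paths D nbrs v (D u) u)"
proof -
  have paths: "set (descent_paths D nbrs v (D u) u) = {p. is_path V E p u v \<and> length p = Suc (D u)}"
    using set_descent_paths[OF D nbrs G v] by blast
  obtain p0 where "is_path V E p0 u v" "length p0 = Suc (D u)"
    using hd_in_set[OF reachable] paths by blast
  then show ?thesis
    unfolding shortest_paths_def paths
    using length_path_ge_distance_lower_bound[OF D, of V] by (auto intro!: order.antisym)
qed

lemma Rw_inverse_sigma_iff:
  assumes finite: "finite (shortest_paths V E u v)" and nonempty: "shortest_paths V E u v \<noteq> {}"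
    and "u \<noteq> v"
  shows "((u, v), 1 / real (sigma V E u v)) \<in> Rw V E w \<longleftrightarrow>
    w \<noteq> u \<and> w \<noteq> v \<and> (\<exists>p \<in> shortest_paths V E u v. w \<in> set (butlast (tl p)))"
proof -
  define through where "through = {p \<in> shortest_paths V E u v. w \<in> set (butlast (tl p))}"
  have sigma_pos: "sigma V E u v > 0"
    using finite nonempty by (simp add: sigma_def card_gt_0_iff)
  have "u \<in> V" "v \<in> V"
    using nonempty is_path_endpoints_in_vertices by (auto simp: shortest_paths_def)
  then have "((u, v), 1 / real (sigma V E u v)) \<in> Rw V E w \<longleftrightarrow> 1 / real (sigma V E u v) \<le> fw V E w u v"
    using \<open>u \<noteq> v\<close> sigma_pos by (simp add: Rw_def)
  also have "\<dots> \<longleftrightarrow> w \<noteq> u \<and> w \<noteq> v \<and> 1 \<le> card through"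
    using sigma_pos by (auto simp: fw_def sigma_through_def through_def divide_le_cancel)
  also have "\<dots> \<longleftrightarrow> w \<noteq> u \<and> w \<noteq> v \<and> through \<noteq> {}"
    using finite by (simp add: through_def Suc_le_eq card_gt_0_iff)
  finally show ?thesis
    by (auto simp: through_def)
qed

lemma shattered_if_all_patterns:
  assumes "\<And>bs. length bs = length qs \<Longrightarrow> \<exists>w \<in> W. map (\<lambda>q. q \<in> R w) qs = bs"
  shows "shattered (set qs) (R ` W)"
  unfolding shattered_def
proof (intro equalityI subsetI)
  fix S assume "S \<in> Pow (set qs)"
  then obtain w where "w \<in> W" and pattern: "map (\<lambda>q. q \<in> R w) qs = map (\<lambda>q. q \<in> S) qs"
    using assms[of "map (\<lambda>q. q \<in> S) qs"] by auto
  have "R w \<inter> set qs = S"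
    using pattern \<open>S \<in> Pow (set qs)\<close> by (auto simp: map_eq_conv)
  then show "S \<in> (\<lambda>R. R \<inter> set qs) ` R ` W"
    using \<open>w \<in> W\<close> by blast
qed auto

definition example_adjacency :: "nat list list" where
  "example_adjacency =
    [[1], [0, 2], [1, 3, 20], [2, 4, 15], [3, 5], [4, 6, 14], [5, 7, 16], [6, 8, 26], [7, 9], [8],
     [11], [10, 12], [11, 13, 23], [12, 14, 15], [5, 13], [3, 13], [6, 17, 22], [16, 18], [17],
     [20, 21], [2, 19], [19, 22], [16, 21], [12, 24], [23, 25], [24, 28], [7, 27], [26, 28], [25, 27]]"

definition example_nbrs :: "nat \<Rightarrow> nat list" where
  "example_nbrs a = (if a < 29 then example_adjacency ! a else [])"

definition example_edge :: "nat \<Rightarrow> nat \<Rightarrow> bool" where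
  "example_edge a b \<longleftrightarrow> b \<in> set (example_nbrs a)"

lemma all_example_edges:
  "(\<forall>a b. example_edge a b \<longrightarrow> P a b) \<longleftrightarrow> (\<forall>a \<in> set [0..<29]. \<forall>b \<in> set (example_nbrs a). P a b)"
  by (auto simp: example_edge_def example_nbrs_def)

lemma undirected_graph_example: "undirected_graph {0..<29} example_edge"
proof -
  have "\<forall>a b. example_edge a b \<longrightarrow> a < 29 \<and> b < 29 \<and> example_edge b a \<and> a \<noteq> b"
    unfolding all_example_edges unfolding example_edge_def by code_simp
  then show ?thesis
    by (auto simp: undirected_graph_def)
qed

definition dist_to_25 :: "nat \<Rightarrow> nat" where
  "dist_to_25 a = [9, 8, 7, 6, 7, 6, 5, 4, 5, 6, 5, 4, 3, 4, 5, 5, 6, 7, 8, 9, 8, 8, 7, 2, 1, 0, 3, 2, 1] ! a"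

definition dist_to_18 :: "nat \<Rightarrow> nat" where
  "dist_to_18 a = [9, 8, 7, 6, 5, 4, 3, 4, 5, 6, 9, 8, 7, 6, 5, 7, 2, 1, 0, 5, 6, 4, 3, 8, 9, 8, 5, 6, 7] ! a"

definition dist_to_9 :: "nat \<Rightarrow> nat" where
  "dist_to_9 a = [9, 8, 7, 6, 5, 4, 3, 2, 1, 0, 9, 8, 7, 6, 5, 7, 4, 5, 6, 7, 8, 6, 5, 8, 7, 6, 3, 4, 5] ! a"

lemma distance_lower_bound_example:
  "distance_lower_bound example_edge 25 dist_to_25"
  "distance_lower_bound example_edge 18 dist_to_18"
  "distance_lower_bound example_edge 9 dist_to_9"
  unfolding distance_lower_bound_def all_example_edges
  unfolding dist_to_25_def dist_to_18_def dist_to_9_def by code_simp+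

lemmas example_shortest_paths_eq =
  shortest_paths_eq_descent_paths[OF _ example_edge_def undirected_graph_example]

lemma shortest_paths_19_25:
  "shortest_paths {0..<29} example_edge 19 25 =
    {[19, 20, 2, 3, 15, 13, 12, 23, 24, 25], [19, 21, 22, 16, 6, 7, 26, 27, 28, 25]}"
proof -
  have "descent_paths dist_to_25 example_nbrs 25 (dist_to_25 19) 19 =
      [[19, 20, 2, 3, 15, 13, 12, 23, 24, 25], [19, 21, 22, 16, 6, 7, 26, 27, 28, 25]]"
    by code_simp
  then show ?thesis
    using example_shortest_paths_eq[OF distance_lower_bound_example(1)] by simp
qed

lemma shortest_paths_15_18:
  "shortest_paths {0..<29} example_edge 15 18 =
    {[15, 3, 4, 5, 6, 16, 17, 18], [15, 13, 14, 5, 6, 16, 17, 18]}"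
proof -
  have "descent_paths dist_to_18 example_nbrs 18 (dist_to_18 15) 15 =
      [[15, 3, 4, 5, 6, 16, 17, 18], [15, 13, 14, 5, 6, 16, 17, 18]]"
    by code_simp
  then show ?thesis
    using example_shortest_paths_eq[OF distance_lower_bound_example(2)] by simp
qed

lemma shortest_paths_0_9:
  "shortest_paths {0..<29} example_edge 0 9 = {[0, 1, 2, 3, 4, 5, 6, 7, 8, 9]}"
proof -
  have "descent_paths dist_to_9 example_nbrs 9 (dist_to_9 0) 0 = [[0, 1, 2, 3, 4, 5, 6, 7, 8, 9]]"
    by code_simp
  then show ?thesis
    using example_shortest_paths_eq[OF distance_lower_bound_example(3)] by simp
qed

lemma shortest_paths_10_9:
  "shortest_paths {0..<29} example_edge 10 9 = {[10, 11, 12, 13, 14, 5, 6, 7, 8, 9]}"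
proof -
  have "descent_paths dist_to_9 example_nbrs 9 (dist_to_9 10) 10 = [[10, 11, 12, 13, 14, 5, 6, 7, 8, 9]]"
    by code_simp
  then show ?thesis
    using example_shortest_paths_eq[OF distance_lower_bound_example(3)] by simp
qed

lemma Rw_19_25_iff:
  "((19, 25), 1/2) \<in> Rw {0..<29} example_edge w \<longleftrightarrow>
     w \<in> {2, 3, 6, 7, 12, 13, 15, 16, 20, 21, 22, 23, 24, 26, 27, 28}"
  using Rw_inverse_sigma_iff[of "{0..<29}" example_edge 19 25 w]
  by (simp add: shortest_paths_19_25 sigma_def, presburger)

lemma Rw_15_18_iff:
  "((15, 18), 1/2) \<in> Rw {0..<29} example_edge w \<longleftrightarrow> w \<in> {3, 4, 5, 6, 13, 14, 16, 17}"
  using Rw_inverse_sigma_iff[of "{0..<29}" example_edge 15 18 w]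
  by (simp add: shortest_paths_15_18 sigma_def, presburger)

lemma Rw_0_9_iff:
  "((0, 9), 1) \<in> Rw {0..<29} example_edge w \<longleftrightarrow> w \<in> {1, 2, 3, 4, 5, 6, 7, 8}"
  using Rw_inverse_sigma_iff[of "{0..<29}" example_edge 0 9 w]
  by (simp add: shortest_paths_0_9 sigma_def, presburger)

lemma Rw_10_9_iff:
  "((10, 9), 1) \<in> Rw {0..<29} example_edge w \<longleftrightarrow> w \<in> {5, 6, 7, 8, 11, 12, 13, 14}"
  using Rw_inverse_sigma_iff[of "{0..<29}" example_edge 10 9 w]
  by (simp add: shortest_paths_10_9 sigma_def, presburger)

lemma shattered_example:
  "shattered {((19, 25), 1/2), ((15, 18), 1/2), ((0, 9), 1), ((10, 9), 1)}
     (Rw {0..<29} example_edge ` {0..<29})"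
proof -
  let ?qs = "[((19::nat, 25::nat), 1/2::real), ((15, 18), 1/2), ((0, 9), 1), ((10, 9), 1)]"
  have all_patterns: "\<forall>bs \<in> set (List.n_lists 4 [False, True]). \<exists>w \<in> set [0..<29::nat].
      [w \<in> {2, 3, 6, 7, 12, 13, 15, 16, 20, 21, 22, 23, 24, 26, 27, 28},
       w \<in> {3, 4, 5, 6, 13, 14, 16, 17}, w \<in> {1, 2, 3, 4, 5, 6, 7, 8}, w \<in> {5, 6, 7, 8, 11, 12, 13, 14}] = bs"
    by code_simp
  have "shattered (set ?qs) (Rw {0..<29} example_edge ` {0..<29})"
  proof (rule shattered_if_all_patterns)
    fix bs :: "bool list"
    assume "length bs = length ?qs"
    then have "bs \<in> set (List.n_lists 4 [False, True])"
      by (auto simp: set_n_lists)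
    from bspec[OF all_patterns this]
    show "\<exists>w \<in> {0..<29}. map (\<lambda>q. q \<in> Rw {0..<29} example_edge w) ?qs = bs"
      unfolding list.map Rw_19_25_iff Rw_15_18_iff Rw_0_9_iff Rw_10_9_iff set_upt .
  qed
  then show ?thesis
    by simp
qed

theorem lemma4:
  shows "\<exists>(V :: nat set) E u1 v1 u2 v2 u3 v3 u4 v4 (x1::real) x2 x3 x4.
    undirected_graph V E \<and>
    {u1,v1,u2,v2,u3,v3,u4,v4} \<subseteq> V \<and>
    u1 \<noteq> v1 \<and> u2 \<noteq> v2 \<and> u3 \<noteq> v3 \<and> u4 \<noteq> v4 \<and>
    sigma V E u1 v1 = 2 \<and> sigma V E u2 v2 = 2 \<and>
    sigma V E u3 v3 = 1 \<and> sigma V E u4 v4 = 1 \<and>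
    x1 \<in> {0<..1} \<and> x2 \<in> {0<..1} \<and> x3 \<in> {0<..1} \<and> x4 \<in> {0<..1} \<and>
    card {((u1,v1),x1), ((u2,v2),x2), ((u3,v3),x3), ((u4,v4),x4)} = 4 \<and>
    shattered {((u1,v1),x1), ((u2,v2),x2), ((u3,v3),x3), ((u4,v4),x4)} (Rw V E ` V)"
proof -
  have "sigma {0..<29} example_edge 19 25 = 2" "sigma {0..<29} example_edge 15 18 = 2"
    "sigma {0..<29} example_edge 0 9 = 1" "sigma {0..<29} example_edge 10 9 = 1"
    by (simp_all add: sigma_def shortest_paths_19_25 shortest_paths_15_18
        shortest_paths_0_9 shortest_paths_10_9)
  with undirected_graph_example shattered_example show ?thesis
    by - (rule exI[of _ "{0..<29}"], rule exI[of _ example_edge],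
        rule exI[of _ 19], rule exI[of _ 25], rule exI[of _ 15], rule exI[of _ 18],
        rule exI[of _ 0], rule exI[of _ 9], rule exI[of _ 10], rule exI[of _ 9],
        rule exI[of _ "1/2"], rule exI[of _ "1/2"], rule exI[of _ 1], rule exI[of _ 1], simp)
qed

end
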